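(* Let $n\ge 3$. Every instance of the $n^2$-puzzle is solvable: for the $n\times n$ grid graph $G=(V,E)$ with a set $R$ of $n^2$ robots and any bijections $x_I,x_G:R\to V$, there exists a collision-free set of feasible paths taking each robot $r$ from $x_I(r)$ to $x_G(r)$.
   Context: Let $\mathbb Z^+=\mathbb N\cup\{0\}$. A path for robot $r_i$ is a map $p_i:\mathbb Z^+\to V$; it is feasible if $p_i(0)=x_I(r_i)$, there is a smallest $k_i^{\min}$ with $p_i(k)=x_G(r_i)$ for all $k\ge k_i^{\min}$, and for $0\le k<k_i^{\min}$ either $(p_i(k),p_i(k+1))\in E$ or $p_i(k)=p_i(k+1)$. Two paths $p_i,p_j$ ($i\ne j$) collide if for some $k$, $p_i(k)=p_j(k)$ or $(p_i(k),p_i(k+1))=(p_j(k+1),p_j(k))$. Multiple robots may move in the same time step. *)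

theory Defs
  imports Main
begin

definition grid_V :: "nat \<Rightarrow> (nat \<times> nat) set" where
  "grid_V n = {0..<n} \<times> {0..<n}"

text \<open>Directed edge set of the (undirected) grid graph: both orientations of each
  edge are included; two cells are adjacent iff they differ by 1 in exactly one coordinate.\<close>
definition grid_E :: "nat \<Rightarrow> ((nat \<times> nat) \<times> (nat \<times> nat)) set" where
  "grid_E n = {((a,b),(c,d)). (a,b) \<in> grid_V n \<and> (c,d) \<in> grid_V n \<and>
      ((a = c \<and> (b = d + 1 \<or> d = b + 1)) \<or> (b = d \<and> (a = c + 1 \<or> c = a + 1)))}"

definition feasible_path :: "('v \<times> 'v) set \<Rightarrow> 'v \<Rightarrow> 'v \<Rightarrow> (nat \<Rightarrow> 'v) \<Rightarrow> bool" where
  "feasible_path E s g p \<longleftrightarrow>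
     p 0 = s \<and>
     (\<exists>kmin. (\<forall>k\<ge>kmin. p k = g) \<and>
             (\<forall>k<kmin. (p k, p (Suc k)) \<in> E \<or> p k = p (Suc k)))"

definition collide :: "(nat \<Rightarrow> 'v) \<Rightarrow> (nat \<Rightarrow> 'v) \<Rightarrow> bool" where
  "collide p q \<longleftrightarrow> (\<exists>k. p k = q k \<or> (p k, p (Suc k)) = (q (Suc k), q k))"

end

theory Submission
  imports Defs "HOL-Library.Product_Plus" "HOL-Combinatorics.Permutations"
begin

text \<open>
  Rotating the four robots on a 2x2 square of the grid by a quarter turn is a legal time step:
  every robot moves along an edge, and no two robots exchange places.  Inside a 3x3 block
  (this is where \<open>n \<ge> 3\<close> is needed) every transposition of two adjacent cells is a product of
  such rotations; translating the block and using the symmetry of the grid in the diagonal, every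
  adjacent transposition of the \<open>n \<times> n\<close> grid is one, hence so is every permutation of its cells.
  Performing the rotations one per time step moves every robot to its goal without collisions.
\<close>

subsection \<open>Permutations realised by collision-free moves\<close>

definition valid_move :: "('v \<times> 'v) set \<Rightarrow> ('v \<Rightarrow> 'v) \<Rightarrow> bool" where
  "valid_move E \<sigma> \<longleftrightarrow> inj \<sigma> \<and> (\<forall>v. \<sigma> v = v \<or> (v, \<sigma> v) \<in> E) \<and>
     (\<forall>v. \<sigma> v \<noteq> v \<longrightarrow> \<sigma> (\<sigma> v) \<noteq> v)"

inductive achievable :: "('v \<times> 'v) set \<Rightarrow> ('v \<Rightarrow> 'v) \<Rightarrow> bool" for E where
  achievable_id: "achievable E id"
| achievable_step: "valid_move E \<sigma> \<Longrightarrow> achievable E \<pi> \<Longrightarrow> achievable E (\<sigma> \<circ> \<pi>)"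

lemma achievable_comp: "achievable E \<rho> \<Longrightarrow> achievable E \<pi> \<Longrightarrow> achievable E (\<rho> \<circ> \<pi>)"
  by (induction rule: achievable.induct) (auto simp: comp_assoc intro: achievable.intros)

lemma valid_move_conj_involution:
  assumes inv: "\<And>v. f (f v) = v" and edge: "\<And>u v. (u, v) \<in> E \<Longrightarrow> (f u, f v) \<in> E"
    and "valid_move E \<sigma>"
  shows "valid_move E (f \<circ> \<sigma> \<circ> f)"
proof -
  have "inj f" by (metis inv injI)
  with assms(3) have "inj (f \<circ> \<sigma> \<circ> f)" by (simp add: valid_move_def inj_compose)
  moreover have "f (\<sigma> (f v)) = v \<or> (v, f (\<sigma> (f v))) \<in> E" for v
    using assms(3) edge[of "f v" "\<sigma> (f v)"] inv unfolding valid_move_def by metis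
  moreover have "f (\<sigma> (f (f (\<sigma> (f v))))) \<noteq> v" if "f (\<sigma> (f v)) \<noteq> v" for v
    using assms(3) that inv unfolding valid_move_def by metis
  ultimately show ?thesis by (simp add: valid_move_def)
qed

lemma achievable_conj_involution:
  assumes "\<And>v. f (f v) = v" and "\<And>u v. (u, v) \<in> E \<Longrightarrow> (f u, f v) \<in> E"
    and "achievable E \<pi>"
  shows "achievable E (f \<circ> \<pi> \<circ> f)"
  using assms(3)
proof (induction rule: achievable.induct)
  case achievable_id
  have "f \<circ> id \<circ> f = id" using assms(1) by (simp add: fun_eq_iff)
  then show ?case by (metis achievable.achievable_id)
next
  case (achievable_step \<sigma> \<pi>)
  have "f \<circ> (\<sigma> \<circ> \<pi>) \<circ> f = (f \<circ> \<sigma> \<circ> f) \<circ> (f \<circ> \<pi> \<circ> f)"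
    using assms(1) by (simp add: fun_eq_iff)
  with achievable_step valid_move_conj_involution[OF assms(1,2)] show ?case
    by (metis achievable.achievable_step)
qed

lemma achievable_transpose_trans:
  assumes "achievable E (Transposition.transpose a b)" "achievable E (Transposition.transpose b c)"
    and "a \<noteq> c"
  shows "achievable E (Transposition.transpose a c)"
proof (cases "a = b")
  case False
  then have "Transposition.transpose b c \<circ> Transposition.transpose a b \<circ> Transposition.transpose b c
      = Transposition.transpose a c"
    using assms(3) transpose_comp_triple[of c a b] by (simp add: transpose_commute)
  with assms(1,2) achievable_comp show ?thesis by metis
qed (use assms(2) in simp)

fun run :: "(nat \<Rightarrow> 'v \<Rightarrow> 'v) \<Rightarrow> nat \<Rightarrow> 'v \<Rightarrow> 'v" where
  "run s 0 = id"
| "run s (Suc k) = s k \<circ> run s k"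

lemma run_cong: "(\<And>k. k < m \<Longrightarrow> s k = s' k) \<Longrightarrow> k \<le> m \<Longrightarrow> run s k = run s' k"
  by (induction k) auto

lemma run_stable:
  assumes "\<And>k. k \<ge> m \<Longrightarrow> s k = id" and "k \<ge> m"
  shows "run s k = run s m"
  using assms(2) by (induction k rule: dec_induct) (simp_all add: assms(1))

lemma achievable_imp_schedule:
  "achievable E \<pi> \<Longrightarrow> \<exists>s m. (\<forall>k. valid_move E (s k)) \<and> (\<forall>k\<ge>m. s k = id) \<and> run s m = \<pi>"
proof (induction rule: achievable.induct)
  case achievable_id
  show ?case
    by (rule exI[of _ "\<lambda>_. id"], rule exI[of _ 0]) (auto simp: valid_move_def)
next
  case (achievable_step \<sigma> \<pi>)
  then obtain s m where s: "\<forall>k. valid_move E (s k)" "\<forall>k\<ge>m. s k = id" "run s m = \<pi>"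
    by blast
  define s' where "s' = s(m := \<sigma>)"
  have "run s' m = run s m" by (rule run_cong[where m = m]) (auto simp: s'_def)
  with s achievable_step(1) have "run s' (Suc m) = \<sigma> \<circ> \<pi>" "\<forall>k. valid_move E (s' k)"
    "\<forall>k\<ge>Suc m. s' k = id"
    by (auto simp: s'_def)
  then show ?case by blast
qed

lemma achievable_imp_motion_plan:
  assumes "achievable E \<pi>"
  shows "\<exists>p. (\<forall>v. feasible_path E v (\<pi> v) (p v)) \<and> (\<forall>u v. u \<noteq> v \<longrightarrow> \<not> collide (p u) (p v))"
proof -
  obtain s m where s: "\<And>k. valid_move E (s k)" "\<And>k. k \<ge> m \<Longrightarrow> s k = id" "run s m = \<pi>"
    using achievable_imp_schedule[OF assms] by blast
  define p where "p v k = run s k v" for v k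
  have step: "p v (Suc k) = s k (p v k)" for v k by (simp add: p_def)
  have "feasible_path E v (\<pi> v) (p v)" for v
    unfolding feasible_path_def
  proof (intro conjI exI[of _ m] allI impI)
    show "p v 0 = v" by (simp add: p_def)
    show "p v k = \<pi> v" if "k \<ge> m" for k
      using run_stable[OF s(2) that] s(3) by (simp add: p_def)
    show "(p v k, p v (Suc k)) \<in> E \<or> p v k = p v (Suc k)" for k
      using s(1)[of k] unfolding step valid_move_def by metis
  qed
  moreover have "\<not> collide (p u) (p v)" if "u \<noteq> v" for u v
  proof
    assume "collide (p u) (p v)"
    then obtain k where k: "p u k = p v k \<or> (p u k, p u (Suc k)) = (p v (Suc k), p v k)"
      by (auto simp: collide_def)
    have "inj (run s k)"
    proof (induction k)
      case (Suc k)
      show ?case unfolding run.simps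
        by (rule inj_compose) (use s(1)[of k] Suc in \<open>simp_all add: valid_move_def\<close>)
    qed simp
    then have distinct: "p u k \<noteq> p v k" using that by (auto simp: p_def inj_eq)
    with k have "s k (s k (p u k)) = p u k" "s k (p u k) \<noteq> p u k"
      by (auto simp: step)
    with s(1)[of k] show False by (auto simp: valid_move_def)
  qed
  ultimately show ?thesis by blast
qed

subsection \<open>Rotations of 2x2 squares\<close>

text \<open>\<open>rot c True\<close> turns the square with lower left corner \<open>c\<close> counterclockwise, \<open>rot c False\<close>
  clockwise.\<close>

fun rot :: "nat \<times> nat \<Rightarrow> bool \<Rightarrow> nat \<times> nat \<Rightarrow> nat \<times> nat" where
  "rot (x,y) d v = (if d then
      (if v = (x,y) then (x+1,y) else if v = (x+1,y) then (x+1,y+1)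
       else if v = (x+1,y+1) then (x,y+1) else if v = (x,y+1) then (x,y) else v)
    else
      (if v = (x,y) then (x,y+1) else if v = (x,y+1) then (x+1,y+1)
       else if v = (x+1,y+1) then (x+1,y) else if v = (x+1,y) then (x,y) else v))"

fun square :: "nat \<times> nat \<Rightarrow> (nat \<times> nat) set" where
  "square (x,y) = {(x,y), (x+1,y), (x+1,y+1), (x,y+1)}"

lemma rot_translate: "rot (c + t) d (v + t) = rot c d v + t"
  by (cases c; cases t; cases v) auto

lemma rot_outside_square: "v \<notin> square c \<Longrightarrow> rot c d v = v"
  by (cases c; cases v) auto

lemma rot_rot_inverse: "rot c (\<not> d) (rot c d v) = v"
  by (cases c; cases v; cases d) auto

lemma valid_move_rot:
  assumes "fst c + 1 < n" "snd c + 1 < n"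
  shows "valid_move (grid_E n) (rot c d)"
proof -
  obtain x y where c: "c = (x,y)" by (cases c)
  have "inj (rot c d)"
    by (rule inj_on_inverseI[where g = "rot c (\<not> d)"]) (simp add: rot_rot_inverse)
  moreover have "rot c d v = v \<or> (v, rot c d v) \<in> grid_E n" for v
    using assms unfolding c rot.simps grid_E_def grid_V_def by simp
  moreover have "rot c d v \<noteq> v \<longrightarrow> rot c d (rot c d v) \<noteq> v" for v
    unfolding c by (cases v; cases d) simp_all
  ultimately show ?thesis by (simp add: valid_move_def)
qed

fun rot_word :: "((nat \<times> nat) \<times> bool) list \<Rightarrow> nat \<times> nat \<Rightarrow> nat \<times> nat" where
  "rot_word [] = id"
| "rot_word ((c,d) # w) = rot c d \<circ> rot_word w"

lemma square_translate: "square (c + t) = (\<lambda>z. z + t) ` square c"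
  by (cases c; cases t) auto

lemma rot_word_translate:
  "rot_word (map (apfst (\<lambda>c. c + t)) w) (v + t) = rot_word w v + t"
  by (induction w arbitrary: v) (auto simp: rot_translate)

lemma rot_word_outside_squares: "(\<forall>(c,d)\<in>set w. v \<notin> square c) \<Longrightarrow> rot_word w v = v"
  by (induction w) (auto simp: rot_outside_square)

lemma achievable_rot_word:
  "(\<forall>(c,d)\<in>set w. fst c + 1 < n \<and> snd c + 1 < n) \<Longrightarrow> achievable (grid_E n) (rot_word w)"
  by (induction w) (auto intro!: achievable.intros valid_move_rot)

subsection \<open>Adjacent transpositions\<close>

definition block_transposition :: "nat \<times> nat \<Rightarrow> nat \<times> nat \<Rightarrow> bool" where
  "block_transposition u v \<longleftrightarrow> (\<exists>w. (\<forall>(c,d)\<in>set w. c \<in> {0..1} \<times> {0..1}) \<and>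
     (\<forall>z\<in>grid_V 3. rot_word w z = Transposition.transpose u v z))"

lemma grid_V_3: "grid_V 3 = {0,1,2} \<times> {0,1,2}"
  by (auto simp: grid_V_def)

text \<open>The words were found by a computer search.\<close>

lemma block_transposition_00_01: "block_transposition (0,0) (0,1)"
  unfolding block_transposition_def grid_V_3
  by (rule exI[of _ "[((1,0),True), ((0,1),False), ((1,0),False), ((0,1),True), ((0,0),True)]"])
    (simp add: transpose_def)

lemma block_transposition_01_02: "block_transposition (0,1) (0,2)"
  unfolding block_transposition_def grid_V_3
  by (rule exI[of _ "[((1,1),True), ((0,1),True), ((0,0),True), ((1,1),False), ((0,0),False)]"])
    (simp add: transpose_def)

lemma block_transposition_10_11: "block_transposition (1,0) (1,1)"
  unfolding block_transposition_def grid_V_3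
  by (rule exI[of _ "[((0,0),True), ((0,1),False), ((1,0),True), ((0,1),True), ((1,0),False),
      ((0,0),True), ((0,0),True)]"])
    (simp add: transpose_def)

lemma block_transposition_11_12: "block_transposition (1,1) (1,2)"
  unfolding block_transposition_def grid_V_3
  by (rule exI[of _ "[((1,1),True), ((1,0),True), ((1,1),True), ((1,0),False), ((0,0),False),
      ((1,1),False), ((0,0),True)]"])
    (simp add: transpose_def)

lemma block_transposition_20_21: "block_transposition (2,0) (2,1)"
  unfolding block_transposition_def grid_V_3
  by (rule exI[of _ "[((1,0),True), ((1,1),True), ((0,0),False), ((1,1),False), ((0,0),True)]"])
    (simp add: transpose_def)

lemma block_transposition_21_22: "block_transposition (2,1) (2,2)"
  unfolding block_transposition_def grid_V_3
  by (rule exI[of _ "[((1,0),False), ((0,1),False), ((1,0),True), ((1,1),True), ((0,1),True)]"])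
    (simp add: transpose_def)

lemma block_transposition_vertical: "a < 3 \<Longrightarrow> b < 2 \<Longrightarrow> block_transposition (a,b) (a,b+1)"
  using block_transposition_00_01 block_transposition_01_02 block_transposition_10_11
    block_transposition_11_12 block_transposition_20_21 block_transposition_21_22
  by (auto simp: numeral_3_eq_3 numeral_2_eq_2 less_Suc_eq)

lemma transpose_translate:
  fixes t :: "nat \<times> nat"
  shows "Transposition.transpose (u + t) (v + t) (z + t) = Transposition.transpose u v z + t"
  by (simp add: transpose_def)

lemma achievable_translated_block_transposition:
  assumes "block_transposition u v" "u \<in> grid_V 3" "v \<in> grid_V 3"
    and "fst t + 2 < n" "snd t + 2 < n"
  shows "achievable (grid_E n) (Transposition.transpose (u + t) (v + t))"
proof -
  obtain w where corners: "\<forall>(c,d)\<in>set w. c \<in> {0..1} \<times> {0..1}"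
    and on_block: "\<forall>z\<in>grid_V 3. rot_word w z = Transposition.transpose u v z"
    using assms(1) by (auto simp: block_transposition_def)
  define w' where "w' = map (apfst (\<lambda>c. c + t)) w"
  let ?block = "(\<lambda>z. z + t) ` grid_V 3"
  have corner: "\<exists>c\<^sub>0\<in>{0..1} \<times> {0..1}. c = c\<^sub>0 + t" if "(c,d) \<in> set w'" for c d
    using that corners by (fastforce simp: w'_def)
  have squares: "square c \<subseteq> ?block" if cd: "(c,d) \<in> set w'" for c d
  proof -
    obtain c\<^sub>0 where "c\<^sub>0 \<in> {0..1} \<times> {0..1}" and c: "c = c\<^sub>0 + t"
      using corner[OF cd] by blast
    then have "square c\<^sub>0 \<subseteq> grid_V 3" by (cases c\<^sub>0) (auto simp: grid_V_def)
    then show ?thesis unfolding c square_translate by blast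
  qed
  have "rot_word w' z = Transposition.transpose (u + t) (v + t) z" for z
  proof (cases "z \<in> ?block")
    case True
    then obtain b where "b \<in> grid_V 3" "z = b + t" by blast
    then show ?thesis
      using on_block by (simp add: w'_def rot_word_translate transpose_translate)
  next
    case False
    with squares have "rot_word w' z = z" by (force intro: rot_word_outside_squares)
    moreover have "z \<noteq> u + t" "z \<noteq> v + t" using False assms(2,3) by auto
    ultimately show ?thesis by simp
  qed
  moreover have "achievable (grid_E n) (rot_word w')"
  proof (intro achievable_rot_word ballI, clarify)
    fix c d assume "(c,d) \<in> set w'"
    then obtain c\<^sub>0 where "c\<^sub>0 \<in> {0..1} \<times> {0..1}" "c = c\<^sub>0 + t" using corner by blast
    then show "fst c + 1 < n \<and> snd c + 1 < n" using assms(4,5) by auto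
  qed
  ultimately show ?thesis by (metis ext)
qed

lemma achievable_transpose_vertical:
  assumes "3 \<le> n" "i < n" "j + 1 < n"
  shows "achievable (grid_E n) (Transposition.transpose (i,j) (i,j+1))"
proof -
  define t where "t = (min i (n - 3), min j (n - 3))"
  define u where "u = (i - fst t, j - snd t)"
  have "block_transposition u (u + (0,1))"
    using assms block_transposition_vertical by (auto simp: u_def t_def)
  moreover have "u \<in> grid_V 3" "u + (0,1) \<in> grid_V 3" "fst t + 2 < n" "snd t + 2 < n"
    using assms by (auto simp: u_def t_def grid_V_def)
  moreover have "u + t = (i,j)" "u + (0,1) + t = (i,j+1)"
    using assms by (auto simp: u_def t_def)
  ultimately show ?thesis
    using achievable_translated_block_transposition by metis
qed

lemma grid_E_swap: "(u, v) \<in> grid_E n \<Longrightarrow> (prod.swap u, prod.swap v) \<in> grid_E n"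
  by (cases u; cases v) (auto simp: grid_E_def grid_V_def)

lemma achievable_transpose_horizontal:
  assumes "3 \<le> n" "i + 1 < n" "j < n"
  shows "achievable (grid_E n) (Transposition.transpose (i,j) (i+1,j))"
proof -
  have "achievable (grid_E n) (prod.swap \<circ> Transposition.transpose (j,i) (j,i+1) \<circ> prod.swap)"
    using assms achievable_transpose_vertical grid_E_swap
    by (intro achievable_conj_involution) auto
  moreover have "prod.swap \<circ> Transposition.transpose (j,i) (j,i+1) \<circ> prod.swap
      = Transposition.transpose (i,j) (i+1,j)"
    by (auto simp: fun_eq_iff transpose_def)
  ultimately show ?thesis by simp
qed

lemma achievable_transpose_origin:
  assumes "3 \<le> n" "(i,j) \<in> grid_V n"
  shows "achievable (grid_E n) (Transposition.transpose (0,0) (i,j))"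
proof -
  have row: "achievable (grid_E n) (Transposition.transpose (0,0) (i,0))" if "i < n" for i
    using that
  proof (induction i)
    case (Suc i)
    then have "achievable (grid_E n) (Transposition.transpose (0,0) (i,0))" by simp
    moreover have "achievable (grid_E n) (Transposition.transpose (i,0) (Suc i,0))"
      using Suc.prems assms(1) achievable_transpose_horizontal[of n i 0] by simp
    ultimately show ?case by (rule achievable_transpose_trans) simp
  qed (simp add: achievable_id)
  from assms(2) show ?thesis
  proof (induction j)
    case 0
    then show ?case using row by (simp add: grid_V_def)
  next
    case (Suc j)
    then have "achievable (grid_E n) (Transposition.transpose (0,0) (i,j))" by (simp add: grid_V_def)
    moreover have "achievable (grid_E n) (Transposition.transpose (i,j) (i,Suc j))"
      using Suc.prems assms(1) achievable_transpose_vertical[of n i j] by (simp add: grid_V_def)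
    ultimately show ?case by (rule achievable_transpose_trans) simp
  qed
qed

lemma achievable_transpose:
  assumes "3 \<le> n" "a \<in> grid_V n" "b \<in> grid_V n"
  shows "achievable (grid_E n) (Transposition.transpose a b)"
proof (cases "a = (0,0)")
  case True
  then show ?thesis using assms achievable_transpose_origin by (cases b) auto
next
  case False
  have "achievable (grid_E n) (Transposition.transpose a (0,0))"
    using assms achievable_transpose_origin by (cases a) (auto simp: transpose_commute)
  moreover have "achievable (grid_E n) (Transposition.transpose (0,0) b)"
    using assms achievable_transpose_origin by (cases b) auto
  ultimately show ?thesis
    using False achievable_transpose_trans achievable_id by (cases "a = b") auto
qed

lemma achievable_permutes:
  assumes "3 \<le> n" "\<pi> permutes grid_V n"
  shows "achievable (grid_E n) \<pi>"
proof -
  have "finite (grid_V n)" by (simp add: grid_V_def)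
  with assms(2) show ?thesis
  proof (induction rule: permutes_induct)
    case id
    show ?case by (rule achievable_id)
  next
    case (swap a b \<pi>)
    then show ?case using achievable_comp achievable_transpose assms(1) by blast
  qed
qed

theorem corollary1:
  fixes n :: nat and R :: "'r set" and xI xG :: "'r \<Rightarrow> nat \<times> nat"
  assumes "n \<ge> 3"
    and "finite R" and "card R = n ^ 2"
    and "bij_betw xI R (grid_V n)" and "bij_betw xG R (grid_V n)"
  shows "\<exists>p :: 'r \<Rightarrow> nat \<Rightarrow> nat \<times> nat.
           (\<forall>r\<in>R. feasible_path (grid_E n) (xI r) (xG r) (p r)) \<and>
           (\<forall>r\<in>R. \<forall>r'\<in>R. r \<noteq> r' \<longrightarrow> \<not> collide (p r) (p r'))"
proof -
  define \<pi> where "\<pi> v = (if v \<in> grid_V n then xG (inv_into R xI v) else v)" for v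
  have "bij_betw (xG \<circ> inv_into R xI) (grid_V n) (grid_V n)"
    using bij_betw_inv_into[OF assms(4)] assms(5) by (rule bij_betw_trans)
  then have "\<pi> permutes grid_V n"
    by (intro bij_imp_permutes) (auto simp: \<pi>_def cong: bij_betw_cong)
  then obtain p where p: "\<And>v. feasible_path (grid_E n) v (\<pi> v) (p v)"
    "\<And>u v. u \<noteq> v \<Longrightarrow> \<not> collide (p u) (p v)"
    using achievable_imp_motion_plan achievable_permutes assms(1) by metis
  have "\<pi> (xI r) = xG r" if "r \<in> R" for r
    using that assms(4) by (auto simp: \<pi>_def bij_betw_def inv_into_f_f)
  moreover have "xI r \<noteq> xI r'" if "r \<in> R" "r' \<in> R" "r \<noteq> r'" for r r'
    using that assms(4) by (auto simp: bij_betw_def inj_on_def)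
  ultimately show ?thesis
    using p by (intro exI[of _ "p \<circ> xI"]) (metis comp_apply)
qed

end
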